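(* Let $H$ be a discrete group which admits a Sylow $p$-subgroup $S\le H$. Then there is an exact sequence \[1\to Z(H)\to N_H(S)\to\mathrm{Aut}(H,S)\to\mathrm{Out}(H)\to1,\] where $N_H(S)\to\mathrm{Aut}(H,S)$ sends $h$ to conjugation $c_h$ and $\mathrm{Aut}(H,S)\to\mathrm{Out}(H)$ is the restriction of the projection $\mathrm{Aut}(H)\to\mathrm{Out}(H)$.
   Context: A discrete $p$-toral group is a group containing a normal subgroup isomorphic to $(\mathbb{Z}/p^\infty)^r$ of finite $p$-power index. For a discrete group $H$, a discrete $p$-toral subgroup $S\le H$ is a Sylow $p$-subgroup of $H$ if every discrete $p$-toral subgroup of $H$ is $H$-conjugate to a subgroup of $S$. $\mathrm{Aut}(H,S)$ denotes the group of automorphisms of $H$ mapping $S$ onto $S$. *)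

theory Defs
  imports "HOL-Algebra.Algebra" "HOL-Algebra.Group_Action" "HOL-Complex_Analysis.Complex_Analysis"
begin

text \<open>The Pruefer p-group Z/p^infinity, realised as the multiplicative group of complex
  roots of unity of p-power order.\<close>
definition prufer :: "nat \<Rightarrow> complex monoid" where
  "prufer p = \<lparr>carrier = {z. \<exists>n::nat. z ^ (p ^ n) = 1}, monoid.mult = (*), one = 1\<rparr>"

definition discrete_p_toral :: "nat \<Rightarrow> ('a, 'b) monoid_scheme \<Rightarrow> bool" where
  "discrete_p_toral p P \<longleftrightarrow> group P \<and>
     (\<exists>N (r::nat) (k::nat). N \<lhd> P \<and>
        (P\<lparr>carrier := N\<rparr>) \<cong> product_group {..<r} (\<lambda>_. prufer p) \<and>
        finite (rcosets\<^bsub>P\<^esub> N) \<and> card (rcosets\<^bsub>P\<^esub> N) = p ^ k)"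

definition conj_set :: "('a, 'b) monoid_scheme \<Rightarrow> 'a \<Rightarrow> 'a set \<Rightarrow> 'a set" where
  "conj_set H h P = (\<lambda>x. h \<otimes>\<^bsub>H\<^esub> x \<otimes>\<^bsub>H\<^esub> inv\<^bsub>H\<^esub> h) ` P"

definition sylow_p :: "nat \<Rightarrow> ('a, 'b) monoid_scheme \<Rightarrow> 'a set \<Rightarrow> bool" where
  "sylow_p p H S \<longleftrightarrow> subgroup S H \<and> discrete_p_toral p (H\<lparr>carrier := S\<rparr>) \<and>
     (\<forall>P. subgroup P H \<and> discrete_p_toral p (H\<lparr>carrier := P\<rparr>) \<longrightarrow>
        (\<exists>h \<in> carrier H. conj_set H h P \<subseteq> S))"

definition center :: "('a, 'b) monoid_scheme \<Rightarrow> 'a set" where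
  "center H = {z \<in> carrier H. \<forall>x \<in> carrier H. z \<otimes>\<^bsub>H\<^esub> x = x \<otimes>\<^bsub>H\<^esub> z}"

text \<open>Conjugation automorphism c_h (as an extensional function, matching auto H).\<close>
definition conjaut :: "('a, 'b) monoid_scheme \<Rightarrow> 'a \<Rightarrow> ('a \<Rightarrow> 'a)" where
  "conjaut H h = (\<lambda>x \<in> carrier H. h \<otimes>\<^bsub>H\<^esub> x \<otimes>\<^bsub>H\<^esub> inv\<^bsub>H\<^esub> h)"

definition AutHS :: "('a, 'b) monoid_scheme \<Rightarrow> 'a set \<Rightarrow> ('a \<Rightarrow> 'a) set" where
  "AutHS H S = {f \<in> auto H. f ` S = S}"

definition Inn :: "('a, 'b) monoid_scheme \<Rightarrow> ('a \<Rightarrow> 'a) set" where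
  "Inn H = conjaut H ` carrier H"

definition Out :: "('a, 'b) monoid_scheme \<Rightarrow> ('a \<Rightarrow> 'a) set monoid" where
  "Out H = AutoGroup H Mod Inn H"

definition out_proj :: "('a, 'b) monoid_scheme \<Rightarrow> ('a \<Rightarrow> 'a) \<Rightarrow> ('a \<Rightarrow> 'a) set" where
  "out_proj H f = Inn H #>\<^bsub>AutoGroup H\<^esub> f"

end

theory Submission
  imports Defs
begin

text \<open>
  Exactness at the centre and at the normaliser is formal: the conjugation c_h is the identity
  exactly when h is central, and c_h maps S onto S exactly when h normalises S, so the kernel of
  Aut(H,S) -> Out(H) is Inn(H) \<inter> Aut(H,S) = c(N_H(S)).

  Surjectivity onto Out(H) is a Frattini argument. For f in Aut(H), f(S) is again discrete
  p-toral, so by the Sylow property some c_h maps f(S) into S; then c_h f maps S injectively into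
  itself and has the same outer class as f. It maps S onto S because discrete p-toral groups are
  co-Hopfian: if T = (Z/p^\<infinity>)^r is normal of index p^k in P, an injective endomorphism of P maps
  T into T (T is p^k-divisible and x^(p^k) \<in> T for all x), maps each finite layer
  {x \<in> T. x^(p^m) = 1} into and hence onto itself, and then permutes the finitely many cosets of T.
\<close>

lemma pow_pow_eq_one_mono:
  fixes z :: "'a :: monoid_mult"
  assumes "z ^ (p ^ n) = 1" "n \<le> m"
  shows "z ^ (p ^ m) = 1"
proof -
  have "p ^ m = p ^ n * p ^ (m - n)" using assms(2) by (simp flip: power_add)
  then show ?thesis using assms(1) by (simp add: power_mult)
qed

lemma prufer_simps [simp]:
  "carrier (prufer p) = {z. \<exists>n. z ^ (p ^ n) = 1}"
  "one (prufer p) = 1"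
  "monoid.mult (prufer p) = (*)"
  by (simp_all add: prufer_def)

lemma prufer_group:
  assumes "p > 0"
  shows "group (prufer p)"
proof (rule groupI)
  fix x y assume "x \<in> carrier (prufer p)" "y \<in> carrier (prufer p)"
  then obtain n m where "x ^ (p ^ n) = 1" "y ^ (p ^ m) = 1" by auto
  then have "x ^ (p ^ (n + m)) = 1" "y ^ (p ^ (n + m)) = 1"
    by (auto intro: pow_pow_eq_one_mono)
  then have "(x * y) ^ (p ^ (n + m)) = 1" by (simp add: power_mult_distrib)
  then show "x \<otimes>\<^bsub>prufer p\<^esub> y \<in> carrier (prufer p)" by auto
next
  fix x assume "x \<in> carrier (prufer p)"
  then obtain n where n: "x ^ (p ^ n) = 1" by auto
  with assms have "x \<noteq> 0" by (auto simp: power_0_left)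
  moreover have "inverse x ^ (p ^ n) = 1" using n by (simp add: power_inverse)
  ultimately show "\<exists>y\<in>carrier (prufer p). y \<otimes>\<^bsub>prufer p\<^esub> x = \<one>\<^bsub>prufer p\<^esub>"
    by (intro bexI[of _ "inverse x"]) auto
qed (auto simp: mult.assoc)

abbreviation prufer_power :: "nat \<Rightarrow> nat \<Rightarrow> (nat \<Rightarrow> complex) monoid" where
  "prufer_power p r \<equiv> product_group {..<r} (\<lambda>_. prufer p)"

lemma prufer_power_nat_pow:
  assumes "x \<in> carrier (prufer_power p r)"
  shows "x [^]\<^bsub>prufer_power p r\<^esub> n = (\<lambda>i\<in>{..<r}. x i ^ n)"
proof (induction n)
  case (Suc n) then show ?case using assms by (auto simp: mult.commute fun_eq_iff)
qed simp

lemma prufer_power_pow_eq_one_iff: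
  assumes "x \<in> carrier (prufer_power p r)"
  shows "x [^]\<^bsub>prufer_power p r\<^esub> n = \<one>\<^bsub>prufer_power p r\<^esub> \<longleftrightarrow> (\<forall>i<r. x i ^ n = 1)"
  using assms by (auto simp: prufer_power_nat_pow fun_eq_iff)

lemma prufer_power_p_torsion:
  assumes "x \<in> carrier (prufer_power p r)"
  shows "\<exists>m. x [^]\<^bsub>prufer_power p r\<^esub> (p ^ m) = \<one>\<^bsub>prufer_power p r\<^esub>"
proof -
  have "\<forall>i<r. \<exists>e. x i ^ (p ^ e) = 1" using assms by (auto simp: PiE_iff)
  then obtain e where e: "\<And>i. i < r \<Longrightarrow> x i ^ (p ^ e i) = 1" by metis
  have "x i ^ (p ^ (\<Sum>j<r. e j)) = 1" if "i < r" for i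
    using e[OF that] by (rule pow_pow_eq_one_mono) (use that in \<open>auto intro: member_le_sum\<close>)
  then show ?thesis using prufer_power_pow_eq_one_iff[OF assms] by blast
qed

lemma finite_prufer_power_pow_eq_one:
  assumes "(n::nat) > 0"
  shows "finite {x \<in> carrier (prufer_power p r). x [^]\<^bsub>prufer_power p r\<^esub> n = \<one>\<^bsub>prufer_power p r\<^esub>}"
proof (rule finite_subset)
  show "finite (\<Pi>\<^sub>E i\<in>{..<r}. {z::complex. z ^ n = 1})"
    using assms by (intro finite_PiE) (auto intro: finite_roots_unity)
  show "{x \<in> carrier (prufer_power p r). x [^]\<^bsub>prufer_power p r\<^esub> n = \<one>\<^bsub>prufer_power p r\<^esub>}
      \<subseteq> (\<Pi>\<^sub>E i\<in>{..<r}. {z. z ^ n = 1})"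
  proof
    fix x assume x: "x \<in> {x \<in> carrier (prufer_power p r). x [^]\<^bsub>prufer_power p r\<^esub> n = \<one>\<^bsub>prufer_power p r\<^esub>}"
    then have "\<forall>i<r. x i ^ n = 1" using prufer_power_pow_eq_one_iff by blast
    with x show "x \<in> (\<Pi>\<^sub>E i\<in>{..<r}. {z. z ^ n = 1})" by (auto simp: PiE_iff)
  qed
qed

lemma prufer_power_divisible:
  assumes "p > 0" "y \<in> carrier (prufer_power p r)"
  shows "\<exists>w\<in>carrier (prufer_power p r). w [^]\<^bsub>prufer_power p r\<^esub> (p ^ k) = y"
proof -
  have "\<forall>i<r. \<exists>z. y i = z ^ (p ^ k)"
    using assms(1) exists_complex_root by (metis gr_implies_not0 power_not_zero)
  then obtain z where z: "\<And>i. i < r \<Longrightarrow> y i = z i ^ (p ^ k)" by metis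
  define w where "w = (\<lambda>i\<in>{..<r}. z i)"
  have "\<exists>n. w i ^ (p ^ n) = 1" if "i < r" for i
  proof -
    obtain n where "y i ^ (p ^ n) = 1" using assms(2) \<open>i < r\<close> by (auto simp: PiE_iff)
    then have "w i ^ (p ^ (k + n)) = 1"
      using z[OF that] that by (simp add: w_def power_add power_mult)
    then show ?thesis by blast
  qed
  then have w_carrier: "w \<in> carrier (prufer_power p r)" by (auto simp: w_def)
  have "w [^]\<^bsub>prufer_power p r\<^esub> (p ^ k) = (\<lambda>i\<in>{..<r}. w i ^ (p ^ k))"
    by (rule prufer_power_nat_pow[OF w_carrier])
  also have "\<dots> = y"
    using assms(2) by (auto simp: w_def z PiE_iff extensional_def)
  finally have "w [^]\<^bsub>prufer_power p r\<^esub> (p ^ k) = y" .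
  with w_carrier show ?thesis by blast
qed

lemma iso_nat_pow_eq_one_iff:
  assumes "\<psi> \<in> iso G K" "group G" "group K" "x \<in> carrier G"
  shows "\<psi> x [^]\<^bsub>K\<^esub> (n::nat) = \<one>\<^bsub>K\<^esub> \<longleftrightarrow> x [^]\<^bsub>G\<^esub> n = \<one>\<^bsub>G\<^esub>"
proof -
  interpret group_hom G K \<psi>
    using assms(1-3) by (simp add: group_hom_def group_hom_axioms_def iso_def)
  have "inj_on \<psi> (carrier G)" using assms(1) by (simp add: iso_def bij_betw_def)
  then have "\<psi> (x [^]\<^bsub>G\<^esub> n) = \<psi> \<one>\<^bsub>G\<^esub> \<longleftrightarrow> x [^]\<^bsub>G\<^esub> n = \<one>\<^bsub>G\<^esub>"
    by (rule inj_on_eq_iff) (use assms(4) in auto)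
  then show ?thesis using assms(4) by (simp add: hom_nat_pow)
qed

lemma iso_finite_pow_eq_one:
  assumes "\<psi> \<in> iso G K" "group G" "group K"
    and "finite {y \<in> carrier K. y [^]\<^bsub>K\<^esub> (n::nat) = \<one>\<^bsub>K\<^esub>}"
  shows "finite {x \<in> carrier G. x [^]\<^bsub>G\<^esub> n = \<one>\<^bsub>G\<^esub>}"
proof (rule inj_on_finite[OF _ _ assms(4)])
  show "inj_on \<psi> {x \<in> carrier G. x [^]\<^bsub>G\<^esub> n = \<one>\<^bsub>G\<^esub>}"
    using assms(1) by (auto simp: iso_def bij_betw_def intro: inj_on_subset)
  show "\<psi> ` {x \<in> carrier G. x [^]\<^bsub>G\<^esub> n = \<one>\<^bsub>G\<^esub>} \<subseteq> {y \<in> carrier K. y [^]\<^bsub>K\<^esub> n = \<one>\<^bsub>K\<^esub>}"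
    using assms(1) iso_nat_pow_eq_one_iff[OF assms(1-3)] by (auto simp: iso_def hom_in_carrier)
qed

lemma iso_nat_pow_root:
  assumes "\<psi> \<in> iso G K" "group G" "group K" "x \<in> carrier G"
    and "\<exists>v\<in>carrier K. v [^]\<^bsub>K\<^esub> (n::nat) = \<psi> x"
  shows "\<exists>w\<in>carrier G. w [^]\<^bsub>G\<^esub> n = x"
proof -
  have \<psi>: "\<psi> \<in> hom G K" "\<psi> ` carrier G = carrier K" "inj_on \<psi> (carrier G)"
    using assms(1) by (simp_all add: iso_iff)
  obtain w where w: "w \<in> carrier G" "\<psi> w [^]\<^bsub>K\<^esub> n = \<psi> x"
    using assms(5) \<psi>(2) by (metis imageE)
  then have "\<psi> (w [^]\<^bsub>G\<^esub> n) = \<psi> x" using \<psi>(1) assms(2,3) by (simp add: hom_nat_pow)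
  then have "w [^]\<^bsub>G\<^esub> n = x"
    using \<psi>(3) assms(2,4) w(1) by (simp add: inj_on_eq_iff monoid.nat_pow_closed group.is_monoid)
  with w(1) show ?thesis by blast
qed

lemma iso_image_rcosets:
  assumes "\<psi> \<in> iso G K" "group G" "subgroup N G"
  shows "bij_betw (\<lambda>R. \<psi> ` R) (rcosets\<^bsub>G\<^esub> N) (rcosets\<^bsub>K\<^esub> (\<psi> ` N))"
proof (rule bij_betw_imageI)
  interpret G: group G by fact
  have \<psi>: "\<psi> \<in> hom G K" "\<psi> ` carrier G = carrier K" "inj_on \<psi> (carrier G)"
    using assms(1) by (simp_all add: iso_iff)
  have coset_subset: "R \<subseteq> carrier G" if "R \<in> rcosets\<^bsub>G\<^esub> N" for R
    using that G.rcosets_part_G[OF assms(3)] by blast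
  show "inj_on (\<lambda>R. \<psi> ` R) (rcosets\<^bsub>G\<^esub> N)"
  proof (rule inj_onI)
    fix R R' assume "R \<in> rcosets\<^bsub>G\<^esub> N" "R' \<in> rcosets\<^bsub>G\<^esub> N" "\<psi> ` R = \<psi> ` R'"
    then show "R = R'" using inj_on_image_eq_iff[OF \<psi>(3)] coset_subset by blast
  qed
  have \<psi>_coset: "\<psi> ` (N #>\<^bsub>G\<^esub> x) = (\<psi> ` N) #>\<^bsub>K\<^esub> \<psi> x" if x: "x \<in> carrier G" for x
  proof -
    have "\<psi> ` (N #>\<^bsub>G\<^esub> x) = (\<lambda>h. \<psi> h \<otimes>\<^bsub>K\<^esub> \<psi> x) ` N"
      using x subgroup.mem_carrier[OF assms(3)] hom_mult[OF \<psi>(1)] by (force simp: r_coset_def)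
    also have "\<dots> = (\<psi> ` N) #>\<^bsub>K\<^esub> \<psi> x" by (auto simp: r_coset_def)
    finally show ?thesis .
  qed
  have "(\<lambda>R. \<psi> ` R) ` (rcosets\<^bsub>G\<^esub> N) = (\<lambda>x. (\<psi> ` N) #>\<^bsub>K\<^esub> \<psi> x) ` carrier G"
    using \<psi>_coset by (auto simp: RCOSETS_def)
  also have "\<dots> = (\<lambda>y. (\<psi> ` N) #>\<^bsub>K\<^esub> y) ` carrier K"
    by (simp flip: \<psi>(2) add: image_image)
  also have "\<dots> = rcosets\<^bsub>K\<^esub> (\<psi> ` N)"
    by (auto simp: RCOSETS_def)
  finally show "(\<lambda>R. \<psi> ` R) ` (rcosets\<^bsub>G\<^esub> N) = rcosets\<^bsub>K\<^esub> (\<psi> ` N)" .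
qed

lemma discrete_p_toral_iso:
  assumes "\<psi> \<in> iso G K" "group G" "group K" "discrete_p_toral p G"
  shows "discrete_p_toral p K"
proof -
  interpret G: group G by fact
  obtain N r k where N: "N \<lhd> G" and N_iso: "G\<lparr>carrier := N\<rparr> \<cong> prufer_power p r"
    and fin: "finite (rcosets\<^bsub>G\<^esub> N)" and card: "card (rcosets\<^bsub>G\<^esub> N) = p ^ k"
    using assms(4) unfolding discrete_p_toral_def by blast
  have N_sub: "subgroup N G" using N by (rule normal_imp_subgroup)
  have "\<psi> ` N \<lhd> K" using iso_normal_subgroup[OF assms(1-3) N] .
  moreover have "K\<lparr>carrier := \<psi> ` N\<rparr> \<cong> prufer_power p r"
  proof -
    have "G\<lparr>carrier := N\<rparr> \<cong> K\<lparr>carrier := \<psi> ` N\<rparr>"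
      using iso_restrict[OF assms(1-3) N_sub] by (rule is_isoI)
    then show ?thesis
      using N_iso G.subgroup_imp_group[OF N_sub] by (metis group.iso_sym iso_trans)
  qed
  moreover have "finite (rcosets\<^bsub>K\<^esub> (\<psi> ` N))" "card (rcosets\<^bsub>K\<^esub> (\<psi> ` N)) = p ^ k"
    using iso_image_rcosets[OF assms(1,2) N_sub] fin card
    by (simp_all add: bij_betw_finite bij_betw_same_card[symmetric])
  ultimately show ?thesis
    using assms(3) unfolding discrete_p_toral_def by blast
qed

lemma AutoGroup_carrier [simp]: "carrier (AutoGroup G) = auto G"
  by (simp add: AutoGroup_def)

lemma AutoGroup_mult:
  "f \<in> auto G \<Longrightarrow> g \<in> auto G \<Longrightarrow> f \<otimes>\<^bsub>AutoGroup G\<^esub> g = compose (carrier G) f g"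
  by (simp add: AutoGroup_def BijGroup_def auto_def)

lemma AutoGroup_one: "\<one>\<^bsub>AutoGroup G\<^esub> = (\<lambda>x\<in>carrier G. x)"
  by (simp add: AutoGroup_def BijGroup_def)

lemma hom_carrier_update:
  assumes "f \<in> hom G K" "A \<subseteq> carrier G" "f ` A \<subseteq> B"
  shows "f \<in> hom (G\<lparr>carrier := A\<rparr>) (K\<lparr>carrier := B\<rparr>)"
  using assms by (simp add: hom_def Pi_iff subset_iff)

lemma kernel_domain_update:
  "A \<subseteq> carrier G \<Longrightarrow> kernel (G\<lparr>carrier := A\<rparr>) K f = A \<inter> kernel G K f"
  by (auto simp: kernel_def)

lemma kernel_codomain_update [simp]: "kernel G (K\<lparr>carrier := B\<rparr>) f = kernel G K f"
  by (simp add: kernel_def)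

context group
begin

lemma discrete_p_toralE:
  assumes "discrete_p_toral p G" "p > 0"
  obtains N k where "N \<lhd> G" "finite (rcosets N)" "card (rcosets N) = p ^ k"
    "\<And>x. x \<in> N \<Longrightarrow> \<exists>n::nat. x [^] n = \<one> \<and> finite {y \<in> N. y [^] n = \<one>}"
    "\<And>x. x \<in> N \<Longrightarrow> \<exists>w\<in>N. w [^] (p ^ k) = x"
proof -
  obtain N r k where N: "N \<lhd> G" and iso: "G\<lparr>carrier := N\<rparr> \<cong> prufer_power p r"
    and "finite (rcosets N)" "card (rcosets N) = p ^ k"
    using assms(1) unfolding discrete_p_toral_def by blast
  obtain \<psi> where \<psi>: "\<psi> \<in> iso (G\<lparr>carrier := N\<rparr>) (prufer_power p r)"
    using iso unfolding is_iso_def by blast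
  have groups: "group (G\<lparr>carrier := N\<rparr>)" "group (prufer_power p r)"
    using N assms(2) by (simp_all add: normal_imp_subgroup subgroup_imp_group prufer_group)
  have \<psi>_bij: "bij_betw \<psi> N (carrier (prufer_power p r))"
    using \<psi> by (simp add: iso_def)
  have \<psi>_carrier: "\<psi> x \<in> carrier (prufer_power p r)" if "x \<in> N" for x
    using \<psi>_bij that by (rule bij_betw_apply)
  have "\<exists>n::nat. x [^] n = \<one> \<and> finite {y \<in> N. y [^] n = \<one>}" if x: "x \<in> N" for x
  proof -
    obtain m where "\<psi> x [^]\<^bsub>prufer_power p r\<^esub> (p ^ m) = \<one>\<^bsub>prufer_power p r\<^esub>"
      using prufer_power_p_torsion[OF \<psi>_carrier[OF x]] by blast
    moreover have "finite {y \<in> N. y [^] (p ^ m) = \<one>}"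
      using iso_finite_pow_eq_one[OF \<psi> groups finite_prufer_power_pow_eq_one] assms(2)
      by (simp flip: nat_pow_consistent)
    ultimately show ?thesis
      using iso_nat_pow_eq_one_iff[OF \<psi> groups] x by (auto simp flip: nat_pow_consistent)
  qed
  moreover have "\<exists>w\<in>N. w [^] (p ^ k) = x" if x: "x \<in> N" for x
    using iso_nat_pow_root[OF \<psi> groups _ prufer_power_divisible[OF assms(2) \<psi>_carrier]] x
    by (simp flip: nat_pow_consistent)
  ultimately show thesis using that[OF N] \<open>finite (rcosets N)\<close> \<open>card (rcosets N) = p ^ k\<close> by blast
qed

lemma pow_card_rcosets_mem_normal:
  assumes "N \<lhd> G" "finite (rcosets N)" "x \<in> carrier G"
  shows "x [^] card (rcosets N) \<in> N"
proof -
  interpret N: normal N G by fact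
  interpret G_mod_N: group "G Mod N" by (rule N.factorgroup_is_group)
  have "carrier (G Mod N) = rcosets N"
    by (simp add: FactGroup_def)
  then have "(N #> x) [^]\<^bsub>G Mod N\<^esub> card (rcosets N) = N"
    using G_mod_N.pow_order_eq_1 assms(3) by (metis N.subset Coset.order_def one_FactGroup rcosetsI)
  then have "N #> (x [^] card (rcosets N)) = N"
    using N.FactGroup_pow[OF assms(3)] by simp
  then show ?thesis
    using assms(3) coset_join1 N.subgroup_axioms by blast
qed

lemma hom_image_subset_of_divisible:
  assumes "\<phi> \<in> hom G G" "N \<subseteq> carrier G"
    and "\<And>x. x \<in> N \<Longrightarrow> \<exists>w\<in>N. w [^] (n::nat) = x"
    and "\<And>x. x \<in> carrier G \<Longrightarrow> x [^] n \<in> N"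
  shows "\<phi> ` N \<subseteq> N"
proof
  fix y assume "y \<in> \<phi> ` N"
  then obtain w where w: "w \<in> N" "y = \<phi> (w [^] n)" using assms(3) by blast
  then have "y = \<phi> w [^] n"
    using assms(1,2) by (simp add: hom_nat_pow is_group subset_iff)
  moreover have "\<phi> w \<in> carrier G"
    using assms(1,2) w(1) by (auto simp: hom_def)
  ultimately show "y \<in> N" using assms(4) by simp
qed

lemma inj_hom_image_eq_of_torsion:
  assumes "\<phi> \<in> hom G G" "inj_on \<phi> (carrier G)" "N \<subseteq> carrier G" "\<phi> ` N \<subseteq> N"
    and torsion: "\<And>x. x \<in> N \<Longrightarrow> \<exists>n::nat. x [^] n = \<one> \<and> finite {y \<in> N. y [^] n = \<one>}"
  shows "\<phi> ` N = N"
proof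
  interpret \<phi>: group_hom G G \<phi>
    using assms(1) is_group by (simp add: group_hom_def group_hom_axioms_def)
  show "N \<subseteq> \<phi> ` N"
  proof
    fix x assume "x \<in> N"
    then obtain n :: nat where "x [^] n = \<one>" and fin: "finite {y \<in> N. y [^] n = \<one>}"
      using torsion by blast
    define T where "T = {y \<in> N. y [^] n = \<one>}"
    have "\<phi> ` T \<subseteq> T"
      using assms(3,4) by (auto simp: T_def \<phi>.hom_nat_pow[symmetric] subset_iff)
    moreover have "inj_on \<phi> T" using assms(2,3) by (auto simp: T_def intro: inj_on_subset)
    ultimately have "\<phi> ` T = T" using fin by (simp add: T_def endo_inj_surj)
    then show "x \<in> \<phi> ` N" using \<open>x \<in> N\<close> \<open>x [^] n = \<one>\<close> by (auto simp: T_def)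
  qed
qed fact

lemma inj_hom_surj_of_finite_index:
  assumes "\<phi> \<in> hom G G" "inj_on \<phi> (carrier G)" "subgroup N G" "\<phi> ` N = N"
    and "finite (rcosets N)"
  shows "\<phi> ` carrier G = carrier G"
proof -
  have \<phi>_carrier: "\<phi> x \<in> carrier G" if "x \<in> carrier G" for x
    using assms(1) that by (auto simp: hom_def)
  have \<phi>_mult: "\<phi> (x \<otimes> y) = \<phi> x \<otimes> \<phi> y" if "x \<in> carrier G" "y \<in> carrier G" for x y
    using assms(1) that by (simp add: hom_mult)
  have coset_subset: "R \<subseteq> carrier G" if "R \<in> rcosets N" for R
    using that rcosets_part_G[OF assms(3)] by blast
  have \<phi>_coset: "\<phi> ` (N #> x) = N #> \<phi> x" if x: "x \<in> carrier G" for x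
  proof -
    have "\<phi> ` (N #> x) = (\<lambda>h. \<phi> h \<otimes> \<phi> x) ` N"
      using x subgroup.mem_carrier[OF assms(3)] by (force simp: r_coset_def \<phi>_mult)
    also have "\<dots> = (\<phi> ` N) #> \<phi> x" by (auto simp: r_coset_def)
    finally show ?thesis using assms(4) by simp
  qed
  have "(\<lambda>R. \<phi> ` R) ` (rcosets N) \<subseteq> rcosets N"
    using \<phi>_coset \<phi>_carrier by (auto simp: RCOSETS_def intro!: bexI)
  moreover have "inj_on (\<lambda>R. \<phi> ` R) (rcosets N)"
  proof (rule inj_onI)
    fix R R' assume "R \<in> rcosets N" "R' \<in> rcosets N" "\<phi> ` R = \<phi> ` R'"
    then show "R = R'" using inj_on_image_eq_iff[OF assms(2)] coset_subset by blast
  qed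
  ultimately have rcosets_eq: "(\<lambda>R. \<phi> ` R) ` (rcosets N) = rcosets N"
    using assms(5) by (rule endo_inj_surj[rotated])
  show ?thesis
  proof
    show "\<phi> ` carrier G \<subseteq> carrier G" using \<phi>_carrier by blast
    show "carrier G \<subseteq> \<phi> ` carrier G"
    proof
      fix x assume x: "x \<in> carrier G"
      then have "N #> x \<in> (\<lambda>R. \<phi> ` R) ` (rcosets N)"
        using rcosets_eq rcosetsI[OF subgroup.subset[OF assms(3)]] by simp
      then obtain R where R: "R \<in> rcosets N" "N #> x = \<phi> ` R" by blast
      have "x \<in> N #> x" using rcos_self[OF x assms(3)] .
      then show "x \<in> \<phi> ` carrier G" using R coset_subset[OF R(1)] by blast
    qed
  qed
qed

lemma discrete_p_toral_inj_hom_surj: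
  assumes "discrete_p_toral p G" "p > 0" "\<phi> \<in> hom G G" "inj_on \<phi> (carrier G)"
  shows "\<phi> ` carrier G = carrier G"
proof -
  obtain N k where N: "N \<lhd> G" and fin: "finite (rcosets N)" and card: "card (rcosets N) = p ^ k"
    and torsion: "\<And>x. x \<in> N \<Longrightarrow> \<exists>n::nat. x [^] n = \<one> \<and> finite {y \<in> N. y [^] n = \<one>}"
    and divisible: "\<And>x. x \<in> N \<Longrightarrow> \<exists>w\<in>N. w [^] (p ^ k) = x"
    by (rule discrete_p_toralE[OF assms(1,2)]) (rule that)
  have N_sub: "subgroup N G" using N by (rule normal_imp_subgroup)
  have "\<phi> ` N \<subseteq> N"
    using assms(3) subgroup.subset[OF N_sub] divisible pow_card_rcosets_mem_normal[OF N fin]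
    unfolding card by (rule hom_image_subset_of_divisible)
  then have "\<phi> ` N = N"
    using assms(3,4) subgroup.subset[OF N_sub] torsion by (intro inj_hom_image_eq_of_torsion)
  then show ?thesis by (rule inj_hom_surj_of_finite_index[OF assms(3,4) N_sub _ fin])
qed

lemma conjaut_apply [simp]: "x \<in> carrier G \<Longrightarrow> conjaut G h x = h \<otimes> x \<otimes> inv h"
  by (simp add: conjaut_def)

lemma conjaut_in_auto: "h \<in> carrier G \<Longrightarrow> conjaut G h \<in> auto G"
  using conjugation_is_bij[of h]
  by (auto simp: auto_def hom_def Bij_def conjaut_def m_assoc inv_solve_left)

lemma conjaut_hom_AutoGroup: "conjaut G \<in> hom G (AutoGroup G)"
proof -
  have "conjaut G = (\<lambda>g. \<lambda>h\<in>carrier G. g \<otimes> h \<otimes> inv g)"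
    by (simp add: fun_eq_iff conjaut_def)
  then have "conjaut G \<in> hom G (BijGroup (carrier G))"
    using conjugation_is_hom by simp
  then show ?thesis
    using conjaut_in_auto by (auto simp: hom_def AutoGroup_def)
qed

lemma conjaut_eq_id_iff:
  assumes "h \<in> carrier G"
  shows "conjaut G h = (\<lambda>x\<in>carrier G. x) \<longleftrightarrow> h \<in> center G"
proof -
  have "h \<otimes> x \<otimes> inv h = x \<longleftrightarrow> h \<otimes> x = x \<otimes> h" if "x \<in> carrier G" for x
    using assms that by (simp add: inv_solve_right')
  then show ?thesis
    using assms by (auto simp: fun_eq_iff conjaut_def center_def)
qed

lemma kernel_conjaut: "kernel G (AutoGroup G) (conjaut G) = center G"
  using conjaut_eq_id_iff by (auto simp: kernel_def AutoGroup_one center_def)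

lemma subgroup_center: "subgroup (center G) G"
proof -
  interpret conj: group_hom G "AutoGroup G" "conjaut G"
    using conjaut_hom_AutoGroup AutoGroup by (simp add: group_hom_def group_hom_axioms_def)
  show ?thesis using conj.subgroup_kernel unfolding kernel_conjaut .
qed

lemma auto_comp_conjaut:
  assumes "f \<in> auto G" "h \<in> carrier G"
  shows "f \<otimes>\<^bsub>AutoGroup G\<^esub> conjaut G h = conjaut G (f h) \<otimes>\<^bsub>AutoGroup G\<^esub> f"
proof -
  have f: "f \<in> hom G G" using assms(1) by (simp add: auto_def)
  then have "f (h \<otimes> x \<otimes> inv h) = f h \<otimes> f x \<otimes> inv (f h)" if "x \<in> carrier G" for x
    using assms(2) that by (simp add: hom_mult hom_in_carrier group_hom.hom_inv
        group_hom_def group_hom_axioms_def is_group)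
  then show ?thesis
    using assms f conjaut_in_auto hom_in_carrier[OF f]
    by (auto simp: AutoGroup_mult compose_def fun_eq_iff)
qed

lemma Inn_normal: "Inn G \<lhd> AutoGroup G"
proof -
  interpret A: group "AutoGroup G" by (rule AutoGroup)
  interpret conj: group_hom G "AutoGroup G" "conjaut G"
    using conjaut_hom_AutoGroup A.is_group by (simp add: group_hom_def group_hom_axioms_def)
  have conj_Inn: "f \<otimes>\<^bsub>AutoGroup G\<^esub> conjaut G h \<otimes>\<^bsub>AutoGroup G\<^esub> inv\<^bsub>AutoGroup G\<^esub> f = conjaut G (f h)"
    if f: "f \<in> auto G" and h: "h \<in> carrier G" for f h
  proof -
    have fA: "f \<in> carrier (AutoGroup G)" using f by simp
    have fhA: "conjaut G (f h) \<in> carrier (AutoGroup G)"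
      using f h conjaut_in_auto hom_in_carrier[of f G G] by (simp add: auto_def)
    have "f \<otimes>\<^bsub>AutoGroup G\<^esub> conjaut G h \<otimes>\<^bsub>AutoGroup G\<^esub> inv\<^bsub>AutoGroup G\<^esub> f
        = conjaut G (f h) \<otimes>\<^bsub>AutoGroup G\<^esub> f \<otimes>\<^bsub>AutoGroup G\<^esub> inv\<^bsub>AutoGroup G\<^esub> f"
      using f h by (simp add: auto_comp_conjaut)
    also have "\<dots> = conjaut G (f h) \<otimes>\<^bsub>AutoGroup G\<^esub> (f \<otimes>\<^bsub>AutoGroup G\<^esub> inv\<^bsub>AutoGroup G\<^esub> f)"
      using A.m_assoc[OF fhA fA A.inv_closed[OF fA]] .
    finally show ?thesis using A.r_inv[OF fA] A.r_one[OF fhA] by simp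
  qed
  show ?thesis
    unfolding A.normal_inv_iff Inn_def
    using conj.img_is_subgroup conj_Inn by (auto simp: auto_def hom_in_carrier)
qed

lemma conjaut_image_eq_coset:
  "S \<subseteq> carrier G \<Longrightarrow> h \<in> carrier G \<Longrightarrow> conjaut G h ` S = h <# S #> inv h"
  by (auto simp: l_coset_def r_coset_def conjaut_def)

lemma normalizer_iff_conjaut:
  assumes "S \<subseteq> carrier G"
  shows "h \<in> normalizer G S \<longleftrightarrow> h \<in> carrier G \<and> conjaut G h ` S = S"
proof -
  have "h \<in> normalizer G S \<longleftrightarrow> h \<in> carrier G \<and> h <# S #> inv h = S"
    using assms by (simp add: normalizer_def stabilizer_def)
  then show ?thesis using assms conjaut_image_eq_coset by metis
qed

lemma conj_set_eq_image:
  "S \<subseteq> carrier G \<Longrightarrow> h \<in> carrier G \<Longrightarrow> conj_set G h S = conjaut G h ` S"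
  by (auto simp: conj_set_def conjaut_def)

lemma center_subset_normalizer:
  assumes "S \<subseteq> carrier G"
  shows "center G \<subseteq> normalizer G S"
proof
  fix h assume h: "h \<in> center G"
  then have "conjaut G h = (\<lambda>x\<in>carrier G. x)"
    using conjaut_eq_id_iff by (auto simp: center_def)
  then show "h \<in> normalizer G S"
    using assms h by (auto simp: normalizer_iff_conjaut center_def)
qed

lemma Inn_Int_AutHS:
  assumes "S \<subseteq> carrier G"
  shows "AutHS G S \<inter> Inn G = conjaut G ` normalizer G S"
  using assms conjaut_in_auto subgroup.subset[OF normalizer_imp_subgroup[OF assms]]
  by (fastforce simp: AutHS_def Inn_def normalizer_iff_conjaut)

lemma out_proj_hom: "out_proj G \<in> hom (AutoGroup G) (Out G)"
proof -
  have "out_proj G = (\<lambda>f. Inn G #>\<^bsub>AutoGroup G\<^esub> f)"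
    by (simp add: fun_eq_iff out_proj_def)
  then show ?thesis
    using normal.r_coset_hom_Mod[OF Inn_normal] by (simp add: Out_def)
qed

lemma kernel_out_proj: "kernel (AutoGroup G) (Out G) (out_proj G) = Inn G"
proof -
  interpret A: group "AutoGroup G" by (rule AutoGroup)
  have Inn: "subgroup (Inn G) (AutoGroup G)" by (rule normal_imp_subgroup[OF Inn_normal])
  have "Inn G #>\<^bsub>AutoGroup G\<^esub> f = Inn G \<longleftrightarrow> f \<in> Inn G" if "f \<in> auto G" for f
    using that A.coset_join1[OF _ _ Inn] A.coset_join2[OF _ Inn] by auto
  then show ?thesis
    using subgroup.subset[OF Inn] by (auto simp: kernel_def out_proj_def Out_def)
qed

lemma group_Out: "group (Out G)"
  unfolding Out_def by (rule normal.factorgroup_is_group[OF Inn_normal])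

lemma carrier_Out: "carrier (Out G) = out_proj G ` auto G"
  by (simp add: Out_def out_proj_def carrier_FactGroup)

lemma auto_iso: "f \<in> auto G \<Longrightarrow> f \<in> iso G G"
  by (simp add: auto_def iso_def Bij_def)

lemma sylow_conjaut_comp_AutHS:
  assumes "sylow_p p G S" "p > 0" "f \<in> auto G"
  obtains h where "h \<in> carrier G" "conjaut G h \<otimes>\<^bsub>AutoGroup G\<^esub> f \<in> AutHS G S"
proof -
  have S: "subgroup S G" and S_toral: "discrete_p_toral p (G\<lparr>carrier := S\<rparr>)"
    using assms(1) by (simp_all add: sylow_p_def)
  have S_carrier: "S \<subseteq> carrier G" using S by (rule subgroup.subset)
  have f_iso: "f \<in> iso G G" using assms(3) by (rule auto_iso)
  have fS: "subgroup (f ` S) G" using subgroup.iso_subgroup[OF S is_group is_group f_iso] .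
  have "discrete_p_toral p (G\<lparr>carrier := f ` S\<rparr>)"
    using discrete_p_toral_iso[OF iso_restrict[OF f_iso is_group is_group S]]
      subgroup_imp_group[OF S] subgroup_imp_group[OF fS] S_toral by blast
  then obtain h where h: "h \<in> carrier G" "conj_set G h (f ` S) \<subseteq> S"
    using assms(1) fS by (auto simp: sylow_p_def)
  define g where "g = conjaut G h \<otimes>\<^bsub>AutoGroup G\<^esub> f"
  have g_auto: "g \<in> auto G"
    using group.subgroup_self[OF AutoGroup] conjaut_in_auto[OF h(1)] assms(3)
    by (simp add: g_def subgroup.m_closed)
  have g_image: "g ` S = conjaut G h ` f ` S"
    using S_carrier conjaut_in_auto[OF h(1)] assms(3) by (auto simp: g_def AutoGroup_mult compose_def)
  have g_S: "g ` S \<subseteq> S"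
    using h fS by (simp add: g_image conj_set_eq_image subgroup.subset)
  have "g \<in> hom (G\<lparr>carrier := S\<rparr>) (G\<lparr>carrier := S\<rparr>)"
    using g_auto S_carrier g_S by (intro hom_carrier_update) (auto simp: auto_def)
  moreover have "inj_on g S"
    using g_auto S_carrier by (auto simp: auto_def Bij_def bij_betw_def intro: inj_on_subset)
  ultimately have "g ` S = S"
    using group.discrete_p_toral_inj_hom_surj[OF subgroup_imp_group[OF S] S_toral assms(2)] by simp
  then have "g \<in> AutHS G S" using g_auto by (simp add: AutHS_def)
  then show thesis using that h(1) by (simp add: g_def)
qed

lemma out_proj_AutHS_eq_carrier_Out:
  assumes "sylow_p p G S" "p > 0"
  shows "out_proj G ` AutHS G S = carrier (Out G)"
proof
  show "out_proj G ` AutHS G S \<subseteq> carrier (Out G)"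
    by (auto simp: carrier_Out AutHS_def)
  show "carrier (Out G) \<subseteq> out_proj G ` AutHS G S"
  proof
    fix Y assume "Y \<in> carrier (Out G)"
    then obtain f where f: "f \<in> auto G" "Y = out_proj G f" by (auto simp: carrier_Out)
    obtain h where h: "h \<in> carrier G" "conjaut G h \<otimes>\<^bsub>AutoGroup G\<^esub> f \<in> AutHS G S"
      using sylow_conjaut_comp_AutHS[OF assms f(1)] .
    have "conjaut G h \<in> kernel (AutoGroup G) (Out G) (out_proj G)"
      using h(1) by (simp add: kernel_out_proj Inn_def)
    then have "out_proj G (conjaut G h \<otimes>\<^bsub>AutoGroup G\<^esub> f) = \<one>\<^bsub>Out G\<^esub> \<otimes>\<^bsub>Out G\<^esub> out_proj G f"
      using f(1) conjaut_in_auto[OF h(1)] by (simp add: kernel_def hom_mult[OF out_proj_hom])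
    also have "\<dots> = out_proj G f"
      using f(1) monoid.l_one[OF group.is_monoid[OF group_Out]] by (simp add: carrier_Out)
    finally have "out_proj G (conjaut G h \<otimes>\<^bsub>AutoGroup G\<^esub> f) = out_proj G f" .
    then show "Y \<in> out_proj G ` AutHS G S" using h(2) f(2) by (metis image_eqI)
  qed
qed

end

theorem lemma3p1:
  fixes H :: "('a, 'b) monoid_scheme" and S :: "'a set" and p :: nat
  assumes "group H" and "Factorial_Ring.prime p" and "sylow_p p H S"
  shows "\<comment> \<open>Z(H) -> N_H(S) is the (injective) inclusion of a subgroup\<close>
         subgroup (center H) (H\<lparr>carrier := normalizer H S\<rparr>)
       \<and> \<comment> \<open>N_H(S) -> Aut(H,S), h |-> c_h, is a homomorphism\<close>
         conjaut H \<in> hom (H\<lparr>carrier := normalizer H S\<rparr>) ((AutoGroup H)\<lparr>carrier := AutHS H S\<rparr>)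
       \<and> \<comment> \<open>Aut(H,S) -> Out(H) is a homomorphism\<close>
         out_proj H \<in> hom ((AutoGroup H)\<lparr>carrier := AutHS H S\<rparr>) (Out H)
       \<and> \<comment> \<open>exactness at N_H(S)\<close>
         kernel (H\<lparr>carrier := normalizer H S\<rparr>) ((AutoGroup H)\<lparr>carrier := AutHS H S\<rparr>) (conjaut H)
           = center H
       \<and> \<comment> \<open>exactness at Aut(H,S)\<close>
         kernel ((AutoGroup H)\<lparr>carrier := AutHS H S\<rparr>) (Out H) (out_proj H)
           = conjaut H ` normalizer H S
       \<and> \<comment> \<open>exactness at Out(H): surjectivity\<close>
         out_proj H ` AutHS H S = carrier (Out H)"
proof -
  interpret H: group H by fact
  have p: "p > 0" using assms(2) by (rule prime_gt_0_nat)
  have S: "S \<subseteq> carrier H" using assms(3) by (simp add: sylow_p_def subgroup.subset)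
  have N: "subgroup (normalizer H S) H" using H.normalizer_imp_subgroup[OF S] .
  have N_carrier: "normalizer H S \<subseteq> carrier H" using N by (rule subgroup.subset)
  have Z_N: "center H \<subseteq> normalizer H S" using H.center_subset_normalizer[OF S] .
  have AutHS: "AutHS H S \<subseteq> carrier (AutoGroup H)" by (auto simp: AutHS_def)
  have Out_surj: "out_proj H ` AutHS H S = carrier (Out H)"
    using H.out_proj_AutHS_eq_carrier_Out[OF assms(3) p] .
  have "subgroup (center H) (H\<lparr>carrier := normalizer H S\<rparr>)"
    using H.subgroup_incl[OF H.subgroup_center N Z_N] .
  moreover have "conjaut H \<in> hom (H\<lparr>carrier := normalizer H S\<rparr>) ((AutoGroup H)\<lparr>carrier := AutHS H S\<rparr>)"
    using H.Inn_Int_AutHS[OF S] by (intro hom_carrier_update[OF H.conjaut_hom_AutoGroup N_carrier]) blast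
  moreover have "out_proj H \<in> hom ((AutoGroup H)\<lparr>carrier := AutHS H S\<rparr>) (Out H)"
    using hom_carrier_update[OF H.out_proj_hom AutHS, of "carrier (Out H)"] Out_surj by simp
  moreover have "kernel (H\<lparr>carrier := normalizer H S\<rparr>) ((AutoGroup H)\<lparr>carrier := AutHS H S\<rparr>) (conjaut H)
      = center H"
    using Z_N by (simp add: kernel_domain_update[OF N_carrier] H.kernel_conjaut Int_absorb1)
  moreover have "kernel ((AutoGroup H)\<lparr>carrier := AutHS H S\<rparr>) (Out H) (out_proj H)
      = conjaut H ` normalizer H S"
    by (simp add: kernel_domain_update[OF AutHS] H.kernel_out_proj H.Inn_Int_AutHS[OF S])
  ultimately show ?thesis using Out_surj by blast
qed

end
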